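(* Let $\{\phi_j\}_{j\in\mathbb Z}$ be the Fourier basis $\phi_j(t)=e^{\mathrm ij\pi t}$, $T=\{t_n\}_{n=1}^N\subseteq[-1,1]$ scattered points with density $h$, and suppose $hM\le1$. Then $$E_2(h,M)\lesssim hM,\qquad E_\infty(h,M)\lesssim hM^{3/2}.$$
   Context: Fourier setting: $D=(-1,1)$, $\nu=1/2$. $h=\sup_{t\in(-1,1)}\min_n|t-t_n|$; Voronoi cells $V_n=\{t\in(-1,1):|t-t_n|\le|t-t_m|\ \forall m\ne n\}$; $\tau_n=\int_{V_n}\nu$. $U_{n,j}=\sqrt{\tau_n}\phi_j(t_n)$, $j\in\mathbb Z$; $P_M$ is the coordinate projection onto indices $\{-M,\dots,M-1\}$. $E_2(h,M)=\|P_M-P_MU^*UP_M\|$ ($\ell^2$ operator norm) and $E_\infty(h,M)=\|P_M-P_MU^*UP_M\|_\infty$ ($\ell^\infty$ operator norm). $a\lesssim b$ means $a\le Cb$ with $C$ independent of $h$, $M$, $N$, $T$. *)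

theory Defs
  imports "HOL-Analysis.Analysis"
begin

definition phi :: "int \<Rightarrow> real \<Rightarrow> complex" where
  "phi j t = exp (\<i> * complex_of_real (of_int j * pi * t))"

definition fill_dist :: "nat \<Rightarrow> (nat \<Rightarrow> real) \<Rightarrow> real" where
  "fill_dist N tp = (SUP t\<in>{-1<..<1}. Min ((\<lambda>n. \<bar>t - tp n\<bar>) ` {1..N}))"

definition voronoi :: "nat \<Rightarrow> (nat \<Rightarrow> real) \<Rightarrow> nat \<Rightarrow> real set" where
  "voronoi N tp n = {t\<in>{-1<..<1}. \<forall>m\<in>{1..N}. m \<noteq> n \<longrightarrow> \<bar>t - tp n\<bar> \<le> \<bar>t - tp m\<bar>}"

text \<open>Quadrature weight tau_n = integral of nu = 1/2 over the Voronoi cell.\<close>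
definition tau :: "nat \<Rightarrow> (nat \<Rightarrow> real) \<Rightarrow> nat \<Rightarrow> real" where
  "tau N tp n = measure lborel (voronoi N tp n) / 2"

definition idx :: "nat \<Rightarrow> int set" where
  "idx M = {- int M .. int M - 1}"

text \<open>Entries of P_M - P_M U^* U P_M, where U_{n,j} = sqrt(tau_n) phi_j(t_n);
  (U^* U)_{j,k} = sum_n tau_n conj(phi_j(t_n)) phi_k(t_n).\<close>
definition err_mat :: "nat \<Rightarrow> (nat \<Rightarrow> real) \<Rightarrow> int \<Rightarrow> int \<Rightarrow> complex" where
  "err_mat N tp j k = (if j = k then 1 else 0)
     - (\<Sum>n\<in>{1..N}. complex_of_real (sqrt (tau N tp n)) * cnj (phi j (tp n))
                      * (complex_of_real (sqrt (tau N tp n)) * phi k (tp n)))"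

definition op_norm2 :: "int set \<Rightarrow> (int \<Rightarrow> int \<Rightarrow> complex) \<Rightarrow> real" where
  "op_norm2 I A = Sup {sqrt (\<Sum>j\<in>I. (cmod (\<Sum>k\<in>I. A j k * x k))\<^sup>2) | x.
                         (\<Sum>k\<in>I. (cmod (x k))\<^sup>2) \<le> 1}"

definition op_norm_inf :: "int set \<Rightarrow> (int \<Rightarrow> int \<Rightarrow> complex) \<Rightarrow> real" where
  "op_norm_inf I A = (if I = {} then 0 else Max ((\<lambda>j. \<Sum>k\<in>I. cmod (A j k)) ` I))"

definition E2 :: "nat \<Rightarrow> (nat \<Rightarrow> real) \<Rightarrow> nat \<Rightarrow> real" where
  "E2 N tp M = op_norm2 (idx M) (err_mat N tp)"

definition Einf :: "nat \<Rightarrow> (nat \<Rightarrow> real) \<Rightarrow> nat \<Rightarrow> real" where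
  "Einf N tp M = op_norm_inf (idx M) (err_mat N tp)"

end

theory Submission
  imports Defs
begin

text \<open>
  For coefficient vectors \<open>x\<close>, \<open>y\<close> on the index set \<open>{-M..M-1}\<close> with trigonometric polynomials
  \<open>X\<close>, \<open>Y\<close>, the bilinear form of \<open>P\<^sub>M - P\<^sub>M U\<^sup>* U P\<^sub>M\<close> is the difference between
  \<open>1/2 \<integral> conj(Y) X\<close> (by orthogonality) and its Voronoi quadrature \<open>\<Sum>\<^sub>n \<tau>\<^sub>n conj(Y(t\<^sub>n)) X(t\<^sub>n)\<close>.
  Every Voronoi cell is an interval of length at most \<open>2h\<close> containing its node, so the quadrature
  error of a \<open>C\<^sup>1\<close> function \<open>p\<close> is at most \<open>h \<integral>|p'|\<close>. For \<open>p = conj(Y) X\<close>, a weighted AM-GM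
  inequality together with Bernstein's bound \<open>\<parallel>X'\<parallel> \<le> \<pi>M \<parallel>X\<parallel>\<close> gives
  \<open>\<integral>|p'| \<le> 2\<pi>M (\<parallel>x\<parallel>\<^sup>2 + \<parallel>y\<parallel>\<^sup>2)\<close>, whence \<open>E\<^sub>2 \<le> 4\<pi>hM\<close>. The error matrix is Hermitian, so each row
  has Euclidean norm at most \<open>E\<^sub>2\<close>, and Cauchy-Schwarz over its \<open>2M\<close> entries gives
  \<open>E\<^sub>\<infinity> \<le> \<surd>(2M) E\<^sub>2\<close>.
\<close>

section \<open>Fill distance and Voronoi cells\<close>

lemma closer_on_segment:
  fixes a b x c d :: real
  assumes "\<bar>a - c\<bar> \<le> \<bar>a - d\<bar>" "\<bar>b - c\<bar> \<le> \<bar>b - d\<bar>" "a \<le> x" "x \<le> b"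
  shows "\<bar>x - c\<bar> \<le> \<bar>x - d\<bar>"
proof -
  have closer_iff: "\<bar>u - c\<bar> \<le> \<bar>u - d\<bar> \<longleftrightarrow> 2 * u * (d - c) \<le> d\<^sup>2 - c\<^sup>2" for u
    by (simp add: abs_le_square_iff power2_eq_square algebra_simps)
  have "2 * x * (d - c) \<le> max (2 * a * (d - c)) (2 * b * (d - c))"
    using assms(3,4) by (cases "c \<le> d") (auto intro: mult_right_mono mult_right_mono_neg simp: le_max_iff_disj)
  then show ?thesis
    using assms(1,2) closer_iff by auto
qed

lemma Min_dist_le_fill_dist:
  fixes tp :: "nat \<Rightarrow> real"
  assumes "N \<ge> 1" "tp ` {1..N} \<subseteq> {-1..1}" "t \<in> {-1<..<1}"
  shows "Min ((\<lambda>n. \<bar>t - tp n\<bar>) ` {1..N}) \<le> fill_dist N tp"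
proof -
  have "Min ((\<lambda>n. \<bar>s - tp n\<bar>) ` {1..N}) \<le> 2" if "s \<in> {-1<..<1}" for s
  proof -
    have "Min ((\<lambda>n. \<bar>s - tp n\<bar>) ` {1..N}) \<le> \<bar>s - tp 1\<bar>"
      using assms(1) by (intro Min_le) auto
    also have "\<dots> \<le> 2"
      using assms(1,2) that by (force simp: image_subset_iff)
    finally show ?thesis .
  qed
  then have "bdd_above ((\<lambda>t. Min ((\<lambda>n. \<bar>t - tp n\<bar>) ` {1..N})) ` {-1<..<1})"
    by (intro bdd_aboveI2)
  then show ?thesis
    unfolding fill_dist_def using assms(3) by (rule cSUP_upper2) auto
qed

lemma fill_dist_nonneg:
  fixes tp :: "nat \<Rightarrow> real"
  assumes "N \<ge> 1" "tp ` {1..N} \<subseteq> {-1..1}"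
  shows "0 \<le> fill_dist N tp"
proof -
  have "0 \<le> Min ((\<lambda>n. \<bar>0 - tp n\<bar>) ` {1..N})"
    using assms(1) by (subst Min_ge_iff) auto
  also have "\<dots> \<le> fill_dist N tp"
    using Min_dist_le_fill_dist[OF assms, of 0] by simp
  finally show ?thesis .
qed

definition closed_voronoi :: "nat \<Rightarrow> (nat \<Rightarrow> real) \<Rightarrow> nat \<Rightarrow> real set" where
  "closed_voronoi N tp n = {s\<in>{-1..1}. \<forall>m\<in>{1..N}. \<bar>s - tp n\<bar> \<le> \<bar>s - tp m\<bar>}"

lemma closed_voronoi_subset: "closed_voronoi N tp n \<subseteq> {-1..1}"
  by (auto simp: closed_voronoi_def)

lemma is_interval_closed_voronoi: "is_interval (closed_voronoi N tp n)"
  unfolding is_interval_1 closed_voronoi_def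
  by (auto intro: closer_on_segment)

lemma compact_closed_voronoi: "compact (closed_voronoi N tp n)"
proof -
  have "closed_voronoi N tp n = {-1..1} \<inter> (\<Inter>m\<in>{1..N}. {s. \<bar>s - tp n\<bar> \<le> \<bar>s - tp m\<bar>})"
    unfolding closed_voronoi_def by auto
  also have "closed \<dots>"
    by (intro closed_Int closed_INT ballI closed_Collect_le continuous_intros closed_atLeastAtMost)
  finally show ?thesis
    using closed_voronoi_subset by (metis bounded_closed_interval bounded_subset compact_eq_bounded_closed)
qed

lemma closed_voronoi_eq_interval:
  fixes tp :: "nat \<Rightarrow> real"
  assumes "n \<in> {1..N}" "tp ` {1..N} \<subseteq> {-1..1}"
  obtains a b where "closed_voronoi N tp n = {a..b}" "a \<le> tp n" "tp n \<le> b" "-1 \<le> a" "b \<le> 1"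
proof -
  have tp_in: "tp n \<in> closed_voronoi N tp n"
    using assms by (auto simp: closed_voronoi_def image_subset_iff)
  have "\<exists>a b. closed_voronoi N tp n = cbox a b"
    using is_interval_compact[of "closed_voronoi N tp n"] is_interval_closed_voronoi compact_closed_voronoi
    by simp
  then obtain a b where ab: "closed_voronoi N tp n = {a..b}"
    by (auto simp: cbox_interval)
  moreover have "{a..b} \<subseteq> {-1..1}"
    using ab closed_voronoi_subset by blast
  ultimately show ?thesis
    using that[OF ab] tp_in by auto
qed

lemma Union_closed_voronoi:
  fixes tp :: "nat \<Rightarrow> real"
  assumes "N \<ge> 1"
  shows "(\<Union>n\<in>{1..N}. closed_voronoi N tp n) = {-1..1}"
proof (intro equalityI subsetI)
  fix s :: real assume s: "s \<in> {-1..1}"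
  have "Min ((\<lambda>m. \<bar>s - tp m\<bar>) ` {1..N}) \<in> (\<lambda>m. \<bar>s - tp m\<bar>) ` {1..N}"
    using assms by (intro Min_in) auto
  then obtain n where n: "n \<in> {1..N}" "\<bar>s - tp n\<bar> = Min ((\<lambda>m. \<bar>s - tp m\<bar>) ` {1..N})"
    by auto
  then have "s \<in> closed_voronoi N tp n"
    using s by (auto simp: closed_voronoi_def)
  then show "s \<in> (\<Union>n\<in>{1..N}. closed_voronoi N tp n)"
    using n(1) by blast
qed (use closed_voronoi_subset in blast)

lemma closed_voronoi_Int_negligible:
  fixes tp :: "nat \<Rightarrow> real"
  assumes "inj_on tp {1..N}"
  shows "pairwise (\<lambda>n m. negligible (closed_voronoi N tp n \<inter> closed_voronoi N tp m)) {1..N}"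
proof (rule pairwiseI)
  fix n m assume n: "n \<in> {1..N}" and m: "m \<in> {1..N}" and "n \<noteq> m"
  then have "tp n \<noteq> tp m"
    using assms by (auto dest: inj_onD)
  moreover have "\<bar>s - tp n\<bar> = \<bar>s - tp m\<bar>"
    if "s \<in> closed_voronoi N tp n \<inter> closed_voronoi N tp m" for s
    using that n m by (auto simp: closed_voronoi_def intro: antisym)
  ultimately have "closed_voronoi N tp n \<inter> closed_voronoi N tp m \<subseteq> {(tp n + tp m) / 2}"
    by (force simp: abs_eq_iff)
  then show "negligible (closed_voronoi N tp n \<inter> closed_voronoi N tp m)"
    using negligible_subset negligible_sing by metis
qed

lemma closed_voronoi_length_le:
  fixes tp :: "nat \<Rightarrow> real"
  assumes "N \<ge> 1" "tp ` {1..N} \<subseteq> {-1..1}" "n \<in> {1..N}"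
    and ab: "closed_voronoi N tp n = {a..b}"
  shows "b - a \<le> 2 * fill_dist N tp"
proof -
  have near: "\<bar>s - tp n\<bar> \<le> fill_dist N tp" if "s \<in> {a<..<b}" for s
  proof -
    have "s \<in> closed_voronoi N tp n" "s \<in> {-1<..<1}"
      using that ab closed_voronoi_subset[of N tp n] by auto
    then have "\<bar>s - tp n\<bar> \<le> Min ((\<lambda>m. \<bar>s - tp m\<bar>) ` {1..N})"
      using assms(1) by (subst Min_ge_iff) (auto simp: closed_voronoi_def)
    also have "\<dots> \<le> fill_dist N tp"
      by (rule Min_dist_le_fill_dist) fact+
    finally show ?thesis .
  qed
  show ?thesis
  proof (rule ccontr)
    assume long: "\<not> ?thesis"
    define e where "e = (b - a - 2 * fill_dist N tp) / 4"
    have "0 \<le> fill_dist N tp"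
      using fill_dist_nonneg assms(1,2) .
    then have "a + e \<in> {a<..<b}" "b - e \<in> {a<..<b}"
      using long unfolding e_def by (auto simp: field_simps)
    then have "\<bar>(a + e) - tp n\<bar> \<le> fill_dist N tp" "\<bar>(b - e) - tp n\<bar> \<le> fill_dist N tp"
      by (auto intro: near)
    then have "(b - e) - (a + e) \<le> 2 * fill_dist N tp"
      unfolding abs_le_iff by linarith
    then show False
      using long by (simp add: e_def field_simps)
  qed
qed

lemma tau_eq_length:
  assumes ab: "closed_voronoi N tp n = {a..b}" "a \<le> b"
  shows "tau N tp n = (b - a) / 2"
proof -
  have vor: "voronoi N tp n = {a..b} \<inter> {-1<..<1}"
    using ab(1) unfolding voronoi_def closed_voronoi_def by auto
  have "{a..b} \<subseteq> {-1..1}"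
    using ab(1) closed_voronoi_subset by blast
  then have "-1 \<le> a" "b \<le> 1"
    using ab(2) by auto
  then have inner: "{a<..<b} \<subseteq> voronoi N tp n"
    unfolding vor by auto
  have outer: "voronoi N tp n \<subseteq> {a..b}"
    unfolding vor by blast
  have sets: "voronoi N tp n \<in> sets lborel"
    unfolding vor by simp
  have Icc: "{a..b} \<in> fmeasurable lborel"
    using fmeasurable_cbox[of a b] by (simp add: cbox_interval)
  have "measure lborel {a<..<b} \<le> measure lborel (voronoi N tp n)"
    by (rule measure_mono_fmeasurable[OF inner _ fmeasurableI2[OF Icc outer sets]]) simp
  moreover have "measure lborel (voronoi N tp n) \<le> measure lborel {a..b}"
    by (rule measure_mono_fmeasurable[OF outer sets Icc])
  ultimately have "measure lborel (voronoi N tp n) = b - a"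
    using ab(2) by simp
  then show ?thesis
    unfolding tau_def by simp
qed

section \<open>Quadrature on Voronoi cells\<close>

lemma norm_diff_le_integral_norm_deriv:
  fixes p p' :: "real \<Rightarrow> 'a::banach"
  assumes der: "\<And>t. t \<in> {a..b} \<Longrightarrow> (p has_vector_derivative p' t) (at t within {a..b})"
    and cont: "continuous_on {a..b} p'"
    and "u \<in> {a..b}" "v \<in> {a..b}"
  shows "norm (p v - p u) \<le> integral {a..b} (\<lambda>s. norm (p' s))"
proof -
  have ordered: "norm (p y - p x) \<le> integral {a..b} (\<lambda>s. norm (p' s))"
    if "x \<le> y" "x \<in> {a..b}" "y \<in> {a..b}" for x y
  proof -
    have sub: "{x..y} \<subseteq> {a..b}"
      using that by auto
    have cont_xy: "continuous_on {x..y} p'"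
      using continuous_on_subset[OF cont sub] .
    have "(p' has_integral (p y - p x)) {x..y}"
      using that(1) sub by (intro fundamental_theorem_of_calculus)
        (auto intro!: has_vector_derivative_within_subset[OF der])
    then have "norm (p y - p x) = norm (integral {x..y} p')"
      by (simp add: integral_unique)
    also have "\<dots> \<le> integral {x..y} (\<lambda>s. norm (p' s))"
      by (intro integral_norm_bound_integral integrable_continuous_interval continuous_on_norm
          cont_xy order_refl)
    also have "\<dots> \<le> integral {a..b} (\<lambda>s. norm (p' s))"
      using cont sub
      by (intro integral_subset_le integrable_continuous_interval continuous_on_norm
          continuous_on_subset[OF cont]) auto
    finally show ?thesis .
  qed
  show ?thesis
    using ordered[of u v] ordered[of v u] assms(3,4) by (cases "u \<le> v") (auto simp: norm_minus_commute)
qed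

lemma rectangle_rule_error:
  fixes p p' :: "real \<Rightarrow> 'a::banach"
  assumes der: "\<And>t. t \<in> {a..b} \<Longrightarrow> (p has_vector_derivative p' t) (at t within {a..b})"
    and cont: "continuous_on {a..b} p'"
    and t0: "t0 \<in> {a..b}"
  shows "norm ((b - a) *\<^sub>R p t0 - integral {a..b} p) \<le> (b - a) * integral {a..b} (\<lambda>s. norm (p' s))"
proof -
  have "continuous_on {a..b} p"
    using der by (meson continuous_on_vector_derivative)
  moreover have "a \<le> b"
    using t0 by simp
  ultimately have "((\<lambda>t. p t0 - p t) has_integral ((b - a) *\<^sub>R p t0 - integral {a..b} p)) {a..b}"
    using has_integral_const_real[of "p t0" a b]
    by (intro has_integral_diff integrable_integral integrable_continuous_interval) auto
  moreover have "norm (p t0 - p t) \<le> integral {a..b} (\<lambda>s. norm (p' s))" if "t \<in> {a..b}" for t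
    using norm_diff_le_integral_norm_deriv[OF der cont that t0] .
  moreover have "0 \<le> integral {a..b} (\<lambda>s. norm (p' s))"
    by (intro integral_nonneg integrable_continuous_interval continuous_on_norm cont) auto
  ultimately have "norm ((b - a) *\<^sub>R p t0 - integral {a..b} p)
      \<le> integral {a..b} (\<lambda>s. norm (p' s)) * measure lborel (cbox a b)"
    by (intro has_integral_bound[where f = "\<lambda>t. p t0 - p t"]) (auto simp: cbox_interval)
  then show ?thesis
    using t0 by (simp add: cbox_interval mult.commute)
qed

lemma integral_eq_sum_closed_voronoi:
  fixes f :: "real \<Rightarrow> 'a::banach"
  assumes "N \<ge> 1" "inj_on tp {1..N}" "tp ` {1..N} \<subseteq> {-1..1}" "continuous_on {-1..1} f"
  shows "integral {-1..1} f = (\<Sum>n\<in>{1..N}. integral (closed_voronoi N tp n) f)"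
proof -
  have "(f has_integral integral (closed_voronoi N tp n) f) (closed_voronoi N tp n)"
    if n: "n \<in> {1..N}" for n
  proof -
    obtain a b where "closed_voronoi N tp n = {a..b}" "-1 \<le> a" "b \<le> 1"
      using closed_voronoi_eq_interval[OF n assms(3)] by metis
    then show ?thesis
      using continuous_on_subset[OF assms(4), of "{a..b}"]
      by (auto intro!: integrable_integral integrable_continuous_interval)
  qed
  from has_integral_UN[OF _ this closed_voronoi_Int_negligible[OF assms(2)]]
  have "(f has_integral (\<Sum>n\<in>{1..N}. integral (closed_voronoi N tp n) f)) {-1..1}"
    using Union_closed_voronoi[OF assms(1)] by simp
  then show ?thesis
    by (rule integral_unique)
qed

lemma closed_voronoi_quadrature_error:
  fixes tp :: "nat \<Rightarrow> real" and p p' :: "real \<Rightarrow> complex"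
  assumes "N \<ge> 1" "tp ` {1..N} \<subseteq> {-1..1}" "n \<in> {1..N}"
    and der: "\<And>t. t \<in> {-1..1} \<Longrightarrow> (p has_vector_derivative p' t) (at t within {-1..1})"
    and cont: "continuous_on {-1..1} p'"
  shows "cmod (of_real (tau N tp n) * p (tp n) - integral (closed_voronoi N tp n) p / 2)
    \<le> fill_dist N tp * integral (closed_voronoi N tp n) (\<lambda>t. cmod (p' t))"
proof -
  obtain a b where ab: "closed_voronoi N tp n = {a..b}" "a \<le> tp n" "tp n \<le> b" "-1 \<le> a" "b \<le> 1"
    using closed_voronoi_eq_interval[OF assms(3,2)] by metis
  have sub: "{a..b} \<subseteq> {-1..1}"
    using ab by auto
  have "cmod ((b - a) *\<^sub>R p (tp n) - integral {a..b} p) \<le> (b - a) * integral {a..b} (\<lambda>t. cmod (p' t))"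
    using ab(2,3) sub
    by (intro rectangle_rule_error continuous_on_subset[OF cont])
      (auto intro: has_vector_derivative_within_subset[OF der])
  moreover have "b - a \<le> 2 * fill_dist N tp"
    using closed_voronoi_length_le[OF assms(1,2,3) ab(1)] .
  moreover have "0 \<le> integral {a..b} (\<lambda>t. cmod (p' t))"
    using sub by (intro integral_nonneg integrable_continuous_interval continuous_on_norm
        continuous_on_subset[OF cont]) auto
  ultimately have bound: "cmod ((b - a) *\<^sub>R p (tp n) - integral {a..b} p)
      \<le> 2 * fill_dist N tp * integral {a..b} (\<lambda>t. cmod (p' t))"
    by (meson mult_right_mono order_trans)
  have "of_real (tau N tp n) * p (tp n) - integral {a..b} p / 2
      = ((b - a) *\<^sub>R p (tp n) - integral {a..b} p) / 2"
    unfolding tau_eq_length[OF ab(1) order_trans[OF ab(2,3)]]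
    by (simp add: scaleR_conv_of_real field_simps)
  then have "cmod (of_real (tau N tp n) * p (tp n) - integral {a..b} p / 2)
      = cmod ((b - a) *\<^sub>R p (tp n) - integral {a..b} p) / 2"
    by (simp only: norm_divide norm_numeral)
  also have "\<dots> \<le> fill_dist N tp * integral {a..b} (\<lambda>t. cmod (p' t))"
    using bound by simp
  finally show ?thesis
    unfolding ab(1) .
qed

lemma voronoi_quadrature_error:
  fixes tp :: "nat \<Rightarrow> real" and p p' :: "real \<Rightarrow> complex"
  assumes "N \<ge> 1" "inj_on tp {1..N}" "tp ` {1..N} \<subseteq> {-1..1}"
    and der: "\<And>t. t \<in> {-1..1} \<Longrightarrow> (p has_vector_derivative p' t) (at t within {-1..1})"
    and cont: "continuous_on {-1..1} p'"
  shows "cmod ((\<Sum>n\<in>{1..N}. of_real (tau N tp n) * p (tp n)) - integral {-1..1} p / 2)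
    \<le> fill_dist N tp * integral {-1..1} (\<lambda>t. cmod (p' t))"
proof -
  have "continuous_on {-1..1} p"
    using der by (meson continuous_on_vector_derivative)
  then have "(\<Sum>n\<in>{1..N}. of_real (tau N tp n) * p (tp n)) - integral {-1..1} p / 2
      = (\<Sum>n\<in>{1..N}. of_real (tau N tp n) * p (tp n) - integral (closed_voronoi N tp n) p / 2)"
    by (simp add: integral_eq_sum_closed_voronoi[OF assms(1-3)] sum_subtractf sum_divide_distrib)
  also have "cmod \<dots> \<le> (\<Sum>n\<in>{1..N}. fill_dist N tp * integral (closed_voronoi N tp n) (\<lambda>t. cmod (p' t)))"
    using closed_voronoi_quadrature_error[OF assms(1,3) _ der cont]
    by (intro order_trans[OF norm_sum sum_mono])
  also have "\<dots> = fill_dist N tp * integral {-1..1} (\<lambda>t. cmod (p' t))"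
    using integral_eq_sum_closed_voronoi[OF assms(1-3) continuous_on_norm[OF cont]]
    by (simp add: sum_distrib_left)
  finally show ?thesis .
qed

section \<open>Trigonometric polynomials\<close>

definition trig_poly :: "int set \<Rightarrow> (int \<Rightarrow> complex) \<Rightarrow> real \<Rightarrow> complex" where
  "trig_poly I c t = (\<Sum>k\<in>I. c k * phi k t)"

definition trig_deriv_coeffs :: "(int \<Rightarrow> complex) \<Rightarrow> int \<Rightarrow> complex" where
  "trig_deriv_coeffs c k = \<i> * of_real (of_int k * pi) * c k"

lemma phi_has_vector_derivative:
  "(phi k has_vector_derivative (\<i> * of_real (of_int k * pi) * phi k t)) (at t within S)"
proof -
  have "phi k = (\<lambda>x. exp (\<i> * of_real (of_int k * pi) * of_real x))"
    by (auto simp: phi_def fun_eq_iff mult.assoc)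
  moreover have "((\<lambda>z. exp (\<i> * of_real (of_int k * pi) * z)) has_field_derivative
      exp (\<i> * of_real (of_int k * pi) * of_real t) * (\<i> * of_real (of_int k * pi))) (at (of_real t))"
    by (auto intro!: derivative_eq_intros)
  ultimately show ?thesis
    using has_vector_derivative_real_field[of _ _ t S] by (simp add: mult.commute)
qed

lemma phi_mult_phi: "phi a t * phi b t = phi (a + b) t"
  by (simp add: phi_def exp_add[symmetric] algebra_simps)

lemma cnj_phi: "cnj (phi a t) = phi (- a) t"
  by (simp add: phi_def exp_cnj)

lemma phi_has_integral: "(phi m has_integral (if m = 0 then 2 else 0)) {-1..1}"
proof (cases "m = 0")
  case True
  then have "phi m = (\<lambda>_. 1)"
    by (auto simp: phi_def fun_eq_iff)
  then show ?thesis
    using True has_integral_const_real[of "1::complex" "-1" 1] by (simp add: scaleR_conv_of_real)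
next
  case False
  define c where "c = \<i> * of_real (of_int m * pi)"
  have "c \<noteq> 0"
    using False by (simp add: c_def)
  then have "((\<lambda>t. phi m t / c) has_vector_derivative phi m x) (at x within {-1..1})" for x
    using has_vector_derivative_divide[OF phi_has_vector_derivative[of m x "{-1..1}"], of c]
    by (simp add: c_def)
  then have "(phi m has_integral (phi m 1 / c - phi m (-1) / c)) {-1..1}"
    by (intro fundamental_theorem_of_calculus) auto
  moreover have "phi m 1 = phi m (-1)"
  proof -
    have "phi m 1 = cis (of_int m * pi)" "phi m (-1) = cis (- (of_int m * pi))"
      by (simp_all add: phi_def cis_conv_exp)
    moreover have "sin (of_int m * pi) = 0"
      by (metis sin_npi_int mult.commute)
    ultimately show ?thesis
      by (simp add: cis.ctr)
  qed
  ultimately show ?thesis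
    using False by simp
qed

lemma trig_poly_has_vector_derivative:
  "(trig_poly I c has_vector_derivative trig_poly I (trig_deriv_coeffs c) t) (at t within S)"
proof -
  have "((\<lambda>t. \<Sum>k\<in>I. c k * phi k t) has_vector_derivative
      (\<Sum>k\<in>I. c k * (\<i> * of_real (of_int k * pi) * phi k t))) (at t within S)"
    by (intro has_vector_derivative_sum has_vector_derivative_mult_right phi_has_vector_derivative)
  then show ?thesis
    unfolding trig_poly_def trig_deriv_coeffs_def by (simp add: mult_ac)
qed

lemma continuous_on_trig_poly: "continuous_on S (trig_poly I c)"
  unfolding trig_poly_def phi_def by (intro continuous_intros)

lemma cnj_trig_poly_mult:
  "cnj (trig_poly I c t) * trig_poly I d t = (\<Sum>j\<in>I. \<Sum>k\<in>I. cnj (c j) * d k * phi (k - j) t)"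
proof -
  have "cnj (trig_poly I c t) * trig_poly I d t
      = (\<Sum>j\<in>I. cnj (c j) * phi (- j) t) * (\<Sum>k\<in>I. d k * phi k t)"
    by (simp add: trig_poly_def cnj_phi)
  also have "\<dots> = (\<Sum>j\<in>I. \<Sum>k\<in>I. cnj (c j) * d k * (phi (- j) t * phi k t))"
    by (simp add: sum_distrib_left sum_distrib_right mult_ac)
  finally show ?thesis
    by (simp add: phi_mult_phi)
qed

lemma trig_poly_inner_has_integral:
  assumes "finite I"
  shows "((\<lambda>t. cnj (trig_poly I c t) * trig_poly I d t) has_integral 2 * (\<Sum>k\<in>I. cnj (c k) * d k)) {-1..1}"
proof -
  have "((\<lambda>t. \<Sum>j\<in>I. \<Sum>k\<in>I. cnj (c j) * d k * phi (k - j) t) has_integral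
      (\<Sum>j\<in>I. \<Sum>k\<in>I. cnj (c j) * d k * (if k - j = 0 then 2 else 0))) {-1..1}"
    by (intro has_integral_sum assms has_integral_mult_right phi_has_integral)
  moreover have "(\<Sum>j\<in>I. \<Sum>k\<in>I. cnj (c j) * d k * (if k - j = 0 then 2 else 0))
      = (\<Sum>j\<in>I. \<Sum>k\<in>I. if j = k then cnj (c j) * d k * 2 else 0)"
    by (intro sum.cong refl) auto
  moreover have "\<dots> = 2 * (\<Sum>k\<in>I. cnj (c k) * d k)"
    using assms by (simp add: sum.delta sum_distrib_left mult_ac)
  ultimately show ?thesis
    by (simp add: cnj_trig_poly_mult)
qed

lemma trig_poly_norm_sq_has_integral:
  assumes "finite I"
  shows "((\<lambda>t. (cmod (trig_poly I c t))\<^sup>2) has_integral 2 * (\<Sum>k\<in>I. (cmod (c k))\<^sup>2)) {-1..1}"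
proof -
  have "((Re \<circ> (\<lambda>t. cnj (trig_poly I c t) * trig_poly I c t))
      has_integral Re (2 * (\<Sum>k\<in>I. cnj (c k) * c k))) {-1..1}"
    by (rule has_integral_linear[OF trig_poly_inner_has_integral[OF assms] bounded_linear_Re])
  moreover have "Re (cnj z * z) = (cmod z)\<^sup>2" for z
    using complex_norm_square[of z] by (metis Re_complex_of_real mult.commute)
  ultimately show ?thesis
    by (simp add: o_def Re_sum)
qed

lemma sum_sq_trig_deriv_coeffs_le:
  assumes "\<And>k. k \<in> I \<Longrightarrow> \<bar>k\<bar> \<le> int M"
  shows "(\<Sum>k\<in>I. (cmod (trig_deriv_coeffs c k))\<^sup>2) \<le> (pi * M)\<^sup>2 * (\<Sum>k\<in>I. (cmod (c k))\<^sup>2)"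
proof -
  have "(cmod (trig_deriv_coeffs c k))\<^sup>2 \<le> (pi * M)\<^sup>2 * (cmod (c k))\<^sup>2" if "k \<in> I" for k
  proof -
    have "\<bar>real_of_int k\<bar> \<le> real M"
      using assms[OF that] by linarith
    then have "cmod (trig_deriv_coeffs c k) \<le> pi * M * cmod (c k)"
      by (simp add: trig_deriv_coeffs_def norm_mult mult_right_mono mult.commute mult.left_commute)
    then show ?thesis
      by (metis norm_ge_zero power_mono power_mult_distrib)
  qed
  then show ?thesis
    by (simp add: sum_distrib_left sum_mono)
qed

section \<open>Matrices on a finite index set\<close>

lemma L2_set_cmod_sq: "(L2_set (\<lambda>k. cmod (x k)) I)\<^sup>2 = (\<Sum>k\<in>I. (cmod (x k))\<^sup>2)"
  by (simp add: L2_set_def sum_nonneg)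

lemma sum_cnj_mult_self: "(\<Sum>j\<in>I. cnj (y j) * y j) = of_real ((L2_set (\<lambda>j. cmod (y j)) I)\<^sup>2)"
  unfolding L2_set_cmod_sq of_real_sum
  by (intro sum.cong refl) (metis complex_norm_square mult.commute)

lemma L2_set_cmod_of_real_mult:
  assumes "0 \<le> a"
  shows "L2_set (\<lambda>k. cmod (of_real a * x k)) I = a * L2_set (\<lambda>k. cmod (x k)) I"
  using assms by (simp add: norm_mult L2_set_right_distrib)

lemma L2_set_norm_le_of_bilinear_bound:
  fixes A :: "'a \<Rightarrow> 'a \<Rightarrow> complex"
  assumes "finite I" "0 \<le> c"
    and bilinear: "\<And>x y. cmod (\<Sum>j\<in>I. cnj (y j) * (\<Sum>k\<in>I. A j k * x k))
      \<le> c * ((\<Sum>k\<in>I. (cmod (x k))\<^sup>2) + (\<Sum>k\<in>I. (cmod (y k))\<^sup>2))"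
  shows "L2_set (\<lambda>j. cmod (\<Sum>k\<in>I. A j k * x k)) I \<le> 2 * c * L2_set (\<lambda>k. cmod (x k)) I"
proof -
  define y where "y j = (\<Sum>k\<in>I. A j k * x k)" for j
  define r where "r = L2_set (\<lambda>j. cmod (y j)) I"
  define s where "s = L2_set (\<lambda>k. cmod (x k)) I"
  have "r \<le> 2 * c * s"
  proof (cases "s = 0")
    case True
    then have "\<forall>k\<in>I. x k = 0"
      using L2_set_eq_0_iff[OF assms(1)] by (simp add: s_def)
    then show ?thesis
      using True by (simp add: r_def y_def L2_set_def)
  next
    case False
    then have "s > 0"
      by (simp add: s_def order_le_neq_trans)
    \<comment> \<open>test the bilinear bound against \<open>y = A x\<close> and \<open>x\<close> rescaled to the length of \<open>y\<close>\<close>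
    define x' where "x' k = of_real (r / s) * x k" for k
    have "(\<Sum>k\<in>I. A j k * x' k) = of_real (r / s) * y j" for j
      by (simp add: x'_def y_def sum_distrib_left mult_ac)
    then have "(\<Sum>j\<in>I. cnj (y j) * (\<Sum>k\<in>I. A j k * x' k)) = of_real (r / s) * (\<Sum>j\<in>I. cnj (y j) * y j)"
      by (simp add: sum_distrib_left mult_ac)
    then have inner: "(\<Sum>j\<in>I. cnj (y j) * (\<Sum>k\<in>I. A j k * x' k)) = of_real (r / s * r\<^sup>2)"
      by (simp only: sum_cnj_mult_self r_def[symmetric] of_real_mult)
    have "r / s * r\<^sup>2 = cmod (\<Sum>j\<in>I. cnj (y j) * (\<Sum>k\<in>I. A j k * x' k))"
      unfolding inner norm_of_real using \<open>s > 0\<close> by (simp add: r_def)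
    also have "\<dots> \<le> c * ((L2_set (\<lambda>k. cmod (x' k)) I)\<^sup>2 + r\<^sup>2)"
      unfolding r_def L2_set_cmod_sq by (rule bilinear)
    also have "L2_set (\<lambda>k. cmod (x' k)) I = r / s * s"
      unfolding x'_def s_def by (rule L2_set_cmod_of_real_mult) (simp add: r_def)
    also have "r / s * s = r"
      using \<open>s > 0\<close> by simp
    finally have scaled: "r / s * r\<^sup>2 \<le> 2 * c * r\<^sup>2"
      by (simp add: algebra_simps)
    then show ?thesis
      using \<open>s > 0\<close> assms(2) mult_right_le_imp_le[OF scaled]
      by (cases "r = 0") (simp_all add: pos_divide_le_eq)
  qed
  then show ?thesis
    by (simp add: r_def s_def y_def)
qed

lemma op_norm2_le:
  assumes "0 \<le> c"
    and "\<And>x. L2_set (\<lambda>j. cmod (\<Sum>k\<in>I. A j k * x k)) I \<le> c * L2_set (\<lambda>k. cmod (x k)) I"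
  shows "op_norm2 I A \<le> c"
  unfolding op_norm2_def
proof (rule cSup_least)
  show "{sqrt (\<Sum>j\<in>I. (cmod (\<Sum>k\<in>I. A j k * x k))\<^sup>2) |x. (\<Sum>k\<in>I. (cmod (x k))\<^sup>2) \<le> 1} \<noteq> {}"
    by (auto intro!: exI[of _ "\<lambda>_. 0"])
next
  fix v assume "v \<in> {sqrt (\<Sum>j\<in>I. (cmod (\<Sum>k\<in>I. A j k * x k))\<^sup>2) |x. (\<Sum>k\<in>I. (cmod (x k))\<^sup>2) \<le> 1}"
  then obtain x where v: "v = L2_set (\<lambda>j. cmod (\<Sum>k\<in>I. A j k * x k)) I"
    and x: "(\<Sum>k\<in>I. (cmod (x k))\<^sup>2) \<le> 1"
    by (auto simp: L2_set_def)
  have "L2_set (\<lambda>k. cmod (x k)) I \<le> 1"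
    using x by (simp add: L2_set_def)
  then show "v \<le> c"
    using assms(2)[of x] assms(1) unfolding v by (meson mult_left_le order_trans)
qed

lemma op_norm_inf_le:
  assumes "finite I" "I \<noteq> {}" "\<And>j. j \<in> I \<Longrightarrow> (\<Sum>k\<in>I. cmod (A j k)) \<le> c"
  shows "op_norm_inf I A \<le> c"
  using assms by (simp add: op_norm_inf_def)

lemma row_sum_le_of_hermitian:
  fixes A :: "'a \<Rightarrow> 'a \<Rightarrow> complex"
  assumes "finite I" "j \<in> I"
    and hermitian: "\<And>j k. A k j = cnj (A j k)"
    and bound: "\<And>x. L2_set (\<lambda>j. cmod (\<Sum>k\<in>I. A j k * x k)) I \<le> c * L2_set (\<lambda>k. cmod (x k)) I"
  shows "(\<Sum>k\<in>I. cmod (A j k)) \<le> sqrt (card I) * c"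
proof -
  define e where "e k = (if k = j then 1 else 0 :: complex)" for k
  have "(\<Sum>k\<in>I. (cmod (e k))\<^sup>2) = (\<Sum>k\<in>I. if k = j then 1 else 0)"
    by (rule sum.cong) (auto simp: e_def)
  then have e_unit: "L2_set (\<lambda>k. cmod (e k)) I = 1"
    using assms(1,2) by (simp add: L2_set_def)
  have "L2_set (\<lambda>k. cmod (A j k)) I = L2_set (\<lambda>l. cmod (\<Sum>k\<in>I. A l k * e k)) I"
  proof (rule L2_set_cong)
    fix l
    have "(\<Sum>k\<in>I. A l k * e k) = A l j"
      using assms(1,2) by (simp add: e_def if_distrib sum.delta cong: if_cong)
    then show "cmod (A j l) = cmod (\<Sum>k\<in>I. A l k * e k)"
      by (metis hermitian complex_mod_cnj)
  qed simp
  also have "\<dots> \<le> c"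
    using bound[of e] by (simp add: e_unit)
  finally have row: "L2_set (\<lambda>k. cmod (A j k)) I \<le> c" .
  have "(\<Sum>k\<in>I. cmod (A j k)) = (\<Sum>k\<in>I. \<bar>cmod (A j k)\<bar> * \<bar>1\<bar>)"
    by simp
  also have "\<dots> \<le> L2_set (\<lambda>k. cmod (A j k)) I * L2_set (\<lambda>k. 1) I"
    by (rule L2_set_mult_ineq)
  also have "\<dots> \<le> c * sqrt (card I)"
    using row by (simp add: L2_set_constant mult_right_mono)
  finally show ?thesis
    by (simp add: mult.commute)
qed

section \<open>The error matrix\<close>

lemma err_mat_eq:
  "err_mat N tp j k = (if j = k then 1 else 0)
     - (\<Sum>n\<in>{1..N}. of_real (tau N tp n) * (cnj (phi j (tp n)) * phi k (tp n)))"
proof -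
  have "of_real (sqrt (tau N tp n)) * a * (of_real (sqrt (tau N tp n)) * b)
      = of_real (tau N tp n) * (a * b)" for n and a b :: complex
  proof -
    have "0 \<le> tau N tp n"
      by (simp add: tau_def)
    then have "sqrt (tau N tp n) * sqrt (tau N tp n) = tau N tp n"
      by simp
    moreover have "of_real (sqrt (tau N tp n)) * a * (of_real (sqrt (tau N tp n)) * b)
        = of_real (sqrt (tau N tp n) * sqrt (tau N tp n)) * (a * b)"
      by (simp only: of_real_mult mult_ac)
    ultimately show ?thesis
      by simp
  qed
  then show ?thesis
    unfolding err_mat_def by (simp only:)
qed

lemma err_mat_hermitian: "err_mat N tp k j = cnj (err_mat N tp j k)"
  unfolding err_mat_eq by (simp add: mult_ac)

lemma err_mat_bilinear_eq:
  assumes "finite I"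
  shows "(\<Sum>j\<in>I. cnj (y j) * (\<Sum>k\<in>I. err_mat N tp j k * x k))
    = (\<Sum>j\<in>I. cnj (y j) * x j)
      - (\<Sum>n\<in>{1..N}. of_real (tau N tp n) * (cnj (trig_poly I y (tp n)) * trig_poly I x (tp n)))"
proof -
  define G where "G j k = (\<Sum>n\<in>{1..N}. of_real (tau N tp n) * (cnj (phi j (tp n)) * phi k (tp n)))" for j k
  have "(\<Sum>k\<in>I. (if j = k then 1 else 0) * x k) = (\<Sum>k\<in>I. if j = k then x k else 0)" for j
    by (intro sum.cong) auto
  then have delta: "(\<Sum>k\<in>I. (if j = k then 1 else 0) * x k) = (if j \<in> I then x j else 0)" for j
    using assms by (simp add: sum.delta)
  have row: "(\<Sum>k\<in>I. err_mat N tp j k * x k) = (if j \<in> I then x j else 0) - (\<Sum>k\<in>I. G j k * x k)" for j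
    unfolding err_mat_eq G_def left_diff_distrib sum_subtractf delta ..
  define F where "F j k n = cnj (y j) * (of_real (tau N tp n) * (cnj (phi j (tp n)) * phi k (tp n)) * x k)"
    for j k n
  have "(\<Sum>n\<in>{1..N}. of_real (tau N tp n) * (cnj (trig_poly I y (tp n)) * trig_poly I x (tp n)))
      = (\<Sum>n\<in>{1..N}. \<Sum>j\<in>I. \<Sum>k\<in>I. F j k n)"
    unfolding trig_poly_def F_def by (simp add: sum_distrib_left sum_distrib_right mult_ac)
  also have "\<dots> = (\<Sum>j\<in>I. \<Sum>n\<in>{1..N}. \<Sum>k\<in>I. F j k n)"
    by (rule sum.swap)
  also have "\<dots> = (\<Sum>j\<in>I. \<Sum>k\<in>I. \<Sum>n\<in>{1..N}. F j k n)"
    by (intro sum.cong refl sum.swap)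
  also have "\<dots> = (\<Sum>j\<in>I. cnj (y j) * (\<Sum>k\<in>I. G j k * x k))"
    by (simp add: F_def G_def sum_distrib_left sum_distrib_right mult_ac)
  finally show ?thesis
    using assms row by (simp add: right_diff_distrib sum_subtractf if_distrib cong: if_cong)
qed

lemma mult_le_weighted_sum_squares:
  fixes a b L :: real
  assumes "L > 0"
  shows "a * b \<le> (L * a\<^sup>2 + b\<^sup>2 / L) / 2"
proof -
  have "2 * L * (a * b) \<le> L\<^sup>2 * a\<^sup>2 + b\<^sup>2"
    using sum_squares_bound[of "L * a" b] by (simp add: power_mult_distrib algebra_simps)
  then show ?thesis
    using assms by (simp add: field_simps power2_eq_square)
qed

lemma norm_cnj_mult_add_cnj_mult_le:
  fixes a a' b b' :: complex and L :: real
  assumes "L > 0"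
  shows "cmod (cnj a * b' + cnj a' * b)
    \<le> (L * (cmod a)\<^sup>2 + (cmod b')\<^sup>2 / L) / 2 + (L * (cmod b)\<^sup>2 + (cmod a')\<^sup>2 / L) / 2"
proof -
  have "cmod (cnj a * b' + cnj a' * b) \<le> cmod a * cmod b' + cmod b * cmod a'"
    by (rule order_trans[OF norm_triangle_ineq]) (simp add: norm_mult mult_ac)
  also have "\<dots> \<le> (L * (cmod a)\<^sup>2 + (cmod b')\<^sup>2 / L) / 2 + (L * (cmod b)\<^sup>2 + (cmod a')\<^sup>2 / L) / 2"
    using assms by (intro add_mono mult_le_weighted_sum_squares)
  finally show ?thesis .
qed

lemma integral_norm_deriv_cnj_trig_poly_mult_le:
  assumes "finite I" "\<And>k. k \<in> I \<Longrightarrow> \<bar>k\<bar> \<le> int M" "M \<ge> 1"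
  shows "integral {-1..1} (\<lambda>t. cmod (cnj (trig_poly I y t) * trig_poly I (trig_deriv_coeffs x) t
            + cnj (trig_poly I (trig_deriv_coeffs y) t) * trig_poly I x t))
    \<le> 2 * pi * M * ((\<Sum>k\<in>I. (cmod (x k))\<^sup>2) + (\<Sum>k\<in>I. (cmod (y k))\<^sup>2))"
    (is "integral _ ?f \<le> _")
proof -
  define L where "L = pi * M"
  have "L > 0"
    using assms(3) by (simp add: L_def)
  define X Y DX DY where "X = (\<Sum>k\<in>I. (cmod (x k))\<^sup>2)" and "Y = (\<Sum>k\<in>I. (cmod (y k))\<^sup>2)"
    and "DX = (\<Sum>k\<in>I. (cmod (trig_deriv_coeffs x k))\<^sup>2)"
    and "DY = (\<Sum>k\<in>I. (cmod (trig_deriv_coeffs y k))\<^sup>2)"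
  define g where "g t = (L * (cmod (trig_poly I y t))\<^sup>2 + (cmod (trig_poly I (trig_deriv_coeffs x) t))\<^sup>2 / L) / 2
      + (L * (cmod (trig_poly I x t))\<^sup>2 + (cmod (trig_poly I (trig_deriv_coeffs y) t))\<^sup>2 / L) / 2" for t
  have "?f t \<le> g t" for t
    unfolding g_def using \<open>L > 0\<close> by (rule norm_cnj_mult_add_cnj_mult_le)
  moreover have "(g has_integral (L * (2 * Y) + 2 * DX / L) / 2 + (L * (2 * X) + 2 * DY / L) / 2) {-1..1}"
    unfolding g_def X_def Y_def DX_def DY_def
    by (intro has_integral_add has_integral_divide has_integral_mult_right
        trig_poly_norm_sq_has_integral assms(1))
  moreover have "?f integrable_on {-1..1}"
    by (intro integrable_continuous_interval continuous_intros continuous_on_trig_poly)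
  ultimately have "integral {-1..1} ?f \<le> (L * (2 * Y) + 2 * DX / L) / 2 + (L * (2 * X) + 2 * DY / L) / 2"
    using has_integral_le[OF integrable_integral] by blast
  also have "\<dots> = L * Y + DX / L + L * X + DY / L"
    by (simp add: field_simps)
  also have "\<dots> \<le> L * Y + L * X + L * X + L * Y"
  proof -
    have "DX \<le> L\<^sup>2 * X" "DY \<le> L\<^sup>2 * Y"
      unfolding DX_def DY_def X_def Y_def L_def using assms(2) by (auto intro: sum_sq_trig_deriv_coeffs_le)
    then have "DX / L \<le> L * X" "DY / L \<le> L * Y"
      using \<open>L > 0\<close> by (simp_all add: field_simps power2_eq_square)
    then show ?thesis
      by linarith
  qed
  finally show ?thesis
    by (simp add: L_def X_def Y_def algebra_simps)
qed

lemma err_mat_bilinear_bound: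
  fixes tp :: "nat \<Rightarrow> real"
  assumes "N \<ge> 1" "inj_on tp {1..N}" "tp ` {1..N} \<subseteq> {-1..1}"
    and "finite I" "\<And>k. k \<in> I \<Longrightarrow> \<bar>k\<bar> \<le> int M" "M \<ge> 1"
  shows "cmod (\<Sum>j\<in>I. cnj (y j) * (\<Sum>k\<in>I. err_mat N tp j k * x k))
    \<le> 2 * pi * M * fill_dist N tp * ((\<Sum>k\<in>I. (cmod (x k))\<^sup>2) + (\<Sum>k\<in>I. (cmod (y k))\<^sup>2))"
proof -
  define p where "p t = cnj (trig_poly I y t) * trig_poly I x t" for t
  define p' where "p' t = cnj (trig_poly I y t) * trig_poly I (trig_deriv_coeffs x) t
      + cnj (trig_poly I (trig_deriv_coeffs y) t) * trig_poly I x t" for t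
  have der: "(p has_vector_derivative p' t) (at t within {-1..1})" for t
    unfolding p_def[abs_def] p'_def
    by (rule has_vector_derivative_mult[OF has_vector_derivative_cnj trig_poly_has_vector_derivative])
      (rule trig_poly_has_vector_derivative)
  have cont: "continuous_on {-1..1} p'"
    unfolding p'_def by (intro continuous_intros continuous_on_trig_poly)
  have "integral {-1..1} p = 2 * (\<Sum>k\<in>I. cnj (y k) * x k)"
    unfolding p_def by (rule integral_unique[OF trig_poly_inner_has_integral[OF assms(4)]])
  then have "cmod (\<Sum>j\<in>I. cnj (y j) * (\<Sum>k\<in>I. err_mat N tp j k * x k))
      = cmod ((\<Sum>n\<in>{1..N}. of_real (tau N tp n) * p (tp n)) - integral {-1..1} p / 2)"
    unfolding err_mat_bilinear_eq[OF assms(4)] p_def by (simp add: norm_minus_commute)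
  also have "\<dots> \<le> fill_dist N tp * integral {-1..1} (\<lambda>t. cmod (p' t))"
    by (rule voronoi_quadrature_error[OF assms(1-3) der cont])
  also have "\<dots> \<le> fill_dist N tp * (2 * pi * M * ((\<Sum>k\<in>I. (cmod (x k))\<^sup>2) + (\<Sum>k\<in>I. (cmod (y k))\<^sup>2)))"
    unfolding p'_def
    by (intro mult_left_mono integral_norm_deriv_cnj_trig_poly_mult_le fill_dist_nonneg assms)
  finally show ?thesis
    by (simp add: mult_ac)
qed

lemma finite_idx: "finite (idx M)"
  by (simp add: idx_def)

lemma card_idx: "card (idx M) = 2 * M"
  by (simp add: idx_def)

lemma abs_le_of_mem_idx: "k \<in> idx M \<Longrightarrow> \<bar>k\<bar> \<le> int M"
  by (auto simp: idx_def)

lemma err_mat_L2_set_le: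
  fixes tp :: "nat \<Rightarrow> real"
  assumes "N \<ge> 1" "inj_on tp {1..N}" "tp ` {1..N} \<subseteq> {-1..1}" "M \<ge> 1"
  shows "L2_set (\<lambda>j. cmod (\<Sum>k\<in>idx M. err_mat N tp j k * x k)) (idx M)
    \<le> 4 * pi * M * fill_dist N tp * L2_set (\<lambda>k. cmod (x k)) (idx M)"
proof -
  have "0 \<le> 2 * pi * M * fill_dist N tp"
    using fill_dist_nonneg[OF assms(1,3)] by simp
  from L2_set_norm_le_of_bilinear_bound[OF finite_idx this
      err_mat_bilinear_bound[OF assms(1-3) finite_idx abs_le_of_mem_idx assms(4)]]
  show ?thesis
    by (simp add: mult.assoc)
qed

lemma E2_le:
  fixes tp :: "nat \<Rightarrow> real"
  assumes "N \<ge> 1" "inj_on tp {1..N}" "tp ` {1..N} \<subseteq> {-1..1}" "M \<ge> 1"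
  shows "E2 N tp M \<le> 4 * pi * M * fill_dist N tp"
  unfolding E2_def
  using fill_dist_nonneg[OF assms(1,3)] by (intro op_norm2_le err_mat_L2_set_le assms) simp

lemma Einf_le:
  fixes tp :: "nat \<Rightarrow> real"
  assumes "N \<ge> 1" "inj_on tp {1..N}" "tp ` {1..N} \<subseteq> {-1..1}" "M \<ge> 1"
  shows "Einf N tp M \<le> 4 * sqrt 2 * pi * fill_dist N tp * M powr (3/2)"
proof -
  have "idx M \<noteq> {}"
    using assms(4) card_idx[of M] by auto
  then have "Einf N tp M \<le> sqrt (2 * M) * (4 * pi * M * fill_dist N tp)"
    unfolding Einf_def
    using row_sum_le_of_hermitian[OF finite_idx _ err_mat_hermitian err_mat_L2_set_le[OF assms]]
    by (intro op_norm_inf_le finite_idx) (simp_all add: card_idx)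
  also have "M * sqrt M = M powr (3/2)"
    using powr_add[of "real M" 1 "1/2"] assms(4) by (simp add: powr_half_sqrt)
  then have "sqrt (2 * M) * (4 * pi * M * fill_dist N tp) = 4 * sqrt 2 * pi * fill_dist N tp * M powr (3/2)"
    by (simp add: real_sqrt_mult mult_ac)
  finally show ?thesis .
qed

theorem lemma8p3:
  shows "\<exists>C::real. \<forall>N::nat. \<forall>tp::nat \<Rightarrow> real. \<forall>M::nat.
     N \<ge> 1 \<longrightarrow> M \<ge> 1 \<longrightarrow> inj_on tp {1..N} \<longrightarrow> tp ` {1..N} \<subseteq> {-1..1} \<longrightarrow>
     fill_dist N tp * real M \<le> 1 \<longrightarrow>
       E2 N tp M \<le> C * fill_dist N tp * real M \<and>
       Einf N tp M \<le> C * fill_dist N tp * real M powr (3/2)"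
proof (intro exI[of _ 30] allI impI conjI)
  \<comment> \<open>the bounds hold with \<open>C = 30\<close> even without the hypothesis \<open>h M \<le> 1\<close>\<close>
  fix N M :: nat and tp :: "nat \<Rightarrow> real"
  assume hyps: "N \<ge> 1" "M \<ge> 1" "inj_on tp {1..N}" "tp ` {1..N} \<subseteq> {-1..1}"
  have h: "0 \<le> fill_dist N tp"
    using fill_dist_nonneg[OF hyps(1,4)] .
  have "4 * pi \<le> 16"
    using pi_less_4 by simp
  moreover have "sqrt 2 \<le> 3 / 2"
    by (rule real_le_lsqrt) (auto simp: power2_eq_square)
  ultimately have "4 * pi \<le> 30" "4 * sqrt 2 * pi \<le> 30"
    using mult_mono[of "4 * pi" 16 "sqrt 2" "3 / 2"] by (auto simp: mult_ac)
  have "E2 N tp M \<le> 4 * pi * (fill_dist N tp * M)"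
    using E2_le[OF hyps(1,3,4,2)] by (simp add: mult_ac)
  also have "\<dots> \<le> 30 * (fill_dist N tp * M)"
    using \<open>4 * pi \<le> 30\<close> h by (intro mult_right_mono) auto
  finally show "E2 N tp M \<le> 30 * fill_dist N tp * M"
    by (simp add: mult.assoc)
  have "Einf N tp M \<le> 4 * sqrt 2 * pi * (fill_dist N tp * M powr (3/2))"
    using Einf_le[OF hyps(1,3,4,2)] by (simp add: mult.assoc)
  also have "\<dots> \<le> 30 * (fill_dist N tp * M powr (3/2))"
    using \<open>4 * sqrt 2 * pi \<le> 30\<close> h by (intro mult_right_mono) auto
  finally show "Einf N tp M \<le> 30 * fill_dist N tp * M powr (3/2)"
    by (simp add: mult.assoc)
qed

end
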